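(* Let $M=(\mathit{AP}_f,S,T,V,\{\sim_o\}_{o\in\mathit{Obs}},s_\iota,o_\iota)$ be a model and $\Phi$ a CTL*KΔ formula. Let $M'$ and $\Phi'=\mathrm{tr}_{o_\iota}(\Phi)$ be as defined in the context. Then $M\models\Phi$ if and only if $M'\models\Phi'$.
   Context: Fix a countably infinite set $\mathit{AP}$ of atomic propositions and a finite nonempty set $\mathit{Obs}$ of observations. For a word $w$ we write $w_i$ for its letter at position $i$ (positions start at $0$), $w_{\le i}$ for its prefix ending at position $i$, $|w|$ for the length of a finite word, and $\mathit{last}(w)$ for the last letter of a finite word; $w\preceq w'$ means $w$ is a prefix of $w'$. Syntax of CTL*KΔ (single agent): history formulas $\varphi::=p\mid\neg\varphi\mid\varphi\wedge\varphi\mid\mathbf A\psi\mid\mathbf K\varphi\mid\Delta^{o}\varphi$ and path formulas $\psi::=\varphi\mid\neg\psi\mid\psi\wedge\psi\mid\mathbf X\psi\mid\psi\,\mathbf U\,\psi$, with $p\in\mathit{AP}$ and $o\in\mathit{Obs}$; the formulas of the logic are the history formulas. CTL*K is the fragment without $\Delta^o$. Abbreviations: $\top=p\vee\neg p$, $\vee,\to$ as usual, $\mathbf F\psi=\top\mathbf U\psi$, $\mathbf G\psi=\neg\mathbf F\neg\psi$. A model is $M=(\mathit{AP}_f,S,T,V,\{\sim_o\}_{o\in O},s_\iota,o_\iota)$ over some finite observation set $O$ (here $O=\mathit{Obs}$ unless stated otherwise), where $\mathit{AP}_f\subseteq\mathit{AP}$ is finite, $S$ is a finite set of states, $T\subseteq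 S\times S$ is left-total, $V:S\to 2^{\mathit{AP}_f}$, each $\sim_o$ is an equivalence relation on $S$, $s_\iota\in S$ and $o_\iota\in O$. A path is an infinite sequence $\pi=s_0s_1\dots$ of states with $s_i\,T\,s_{i+1}$ for all $i$ (starting at any state); a history is a finite nonempty prefix of a path. An observation record is a finite word over $O\times\mathbb N$; $\epsilon$ is the empty record, $r\cdot(o,n)$ is $r$ with $(o,n)$ appended, and $r_{=n}$ is the subword of $r$ consisting of the pairs whose second component is $n$. The list $\mathit{ol}(r,n)$ is defined by $\mathit{ol}(r,0)=o_\iota\cdot o_1\cdots o_k$ if $r_{=0}=(o_1,0)\cdots(o_k,0)$, and $\mathit{ol}(r,n+1)=\mathit{last}(\mathit{ol}(r,n))\cdot o_1\cdots o_k$ if $r_{=n+1}=(o_1,n+1)\cdots(o_k,n+1)$. Two histories are equivalent, $h\approx_r h'$, if $|h|=|h'|$ and for every $i<|h|$ and every $o$ occurring in $\mathit{ol}(r,i)$, $h_i\sim_o h'_i$. Natural semantics: for a history $h$ and record $r$: $h,r\models p$ iff $p\in V(\mathit{last}(h))$; $h,r\models\neg\varphi$ iff not $h,r\models\varphi$; $h,r\models\varphi_1\wedge\varphi_2$ iff both hold; $h,r\models\mathbf A\psi$ iff for all paths $\pi$ with $h\preceq\pi$, $\pi,|h|-1,r\models\psi$; $h,r\models\mathbf K\varphi$ iff $h',r\models\varphi$ for all histories $h'$ with $h'\approx_r h$; $h,r\models\Delta^o\varphi$ iff $h,r\cdot(o,|h|-1)\models\varphi$. For a path $\pi$, $n\in\mathbb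 N$ and record $r$: $\pi,n,r\models\varphi$ iff $\pi_{\le n},r\models\varphi$; negation and conjunction as usual; $\pi,n,r\models\mathbf X\psi$ iff $\pi,n+1,r\models\psi$; $\pi,n,r\models\psi_1\mathbf U\psi_2$ iff there is $m\ge n$ with $\pi,m,r\models\psi_2$ and $\pi,k,r\models\psi_1$ for all $n\le k<m$. $M\models\varphi$ iff $s_\iota,\epsilon\models\varphi$ ($s_\iota$ viewed as a one-state history). Construction of $M'$: for each $o\in\mathit{Obs}$ let $p_o\in\mathit{AP}\setminus\mathit{AP}_f$ be a fresh atomic proposition (pairwise distinct). $M'$ is the model over the one-element observation set $\{*\}$ with propositions $\mathit{AP}_f\cup\{p_o\mid o\in\mathit{Obs}\}$, states $S'=\{s_o\mid s\in S,\ o\in\mathit{Obs}\}$ (one copy $s_o$ of each state per observation), transitions $T'=\{(s_o,s'_o)\mid o\in\mathit{Obs},\ (s,s')\in T\}\cup\{(s_o,s_{o'})\mid s\in S,\ o,o'\in\mathit{Obs},\ o\ne o'\}$, valuation $V'(s_o)=V(s)\cup\{p_o\}$, single equivalence relation $\sim_*=\{(s_o,s'_o)\mid o\in\mathit{Obs},\ s\sim_o s'\}$, initial state $(s_\iota)_{o_\iota}$ and initial observation $*$. Translation $\mathrm{tr}_o$, for $o\in\mathit{Obs}$, defined by induction: $\mathrm{tr}_o(p)=p$; $\mathrm{tr}_o(\neg\varphi)=\neg\mathrm{tr}_o(\varphi)$; $\mathrm{tr}_o(\varphi_1\wedge\varphi_2)=\mathrm{tr}_o(\varphi_1)\wedge\mathrm{tr}_o(\varphi_2)$;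 $\mathrm{tr}_o(\mathbf K\varphi)=\mathbf K\,\mathrm{tr}_o(\varphi)$; $\mathrm{tr}_o(\mathbf A\psi)=\mathbf A(\mathbf G p_o\to\mathrm{tr}_o(\psi))$; $\mathrm{tr}_o(\Delta^{o'}\varphi)=\mathrm{tr}_{o'}(\varphi)$ if $o'=o$ and $\mathrm{tr}_o(\Delta^{o'}\varphi)=\mathbf A\mathbf X(p_{o'}\to\mathrm{tr}_{o'}(\varphi))$ if $o'\ne o$; on path formulas $\mathrm{tr}_o$ commutes with $\neg,\wedge,\mathbf X,\mathbf U$ and applies the history-formula clauses to history subformulas. $\Phi'=\mathrm{tr}_{o_\iota}(\Phi)$, a CTL*K formula. *)

theory Defs
  imports Main "HOL-Library.Countable"
begin

datatype ('ap, 'o) hform =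
    HProp 'ap
  | HNot "('ap, 'o) hform"
  | HAnd "('ap, 'o) hform" "('ap, 'o) hform"
  | HA "('ap, 'o) pform"
  | HK "('ap, 'o) hform"
  | HDelta 'o "('ap, 'o) hform"
and ('ap, 'o) pform =
    PH "('ap, 'o) hform"
  | PNot "('ap, 'o) pform"
  | PAnd "('ap, 'o) pform" "('ap, 'o) pform"
  | PX "('ap, 'o) pform"
  | PU "('ap, 'o) pform" "('ap, 'o) pform"

primrec hatoms :: "('ap, 'o) hform \<Rightarrow> 'ap set"
  and patoms :: "('ap, 'o) pform \<Rightarrow> 'ap set" where
  "hatoms (HProp a) = {a}"
| "hatoms (HNot f) = hatoms f"
| "hatoms (HAnd f g) = hatoms f \<union> hatoms g"
| "hatoms (HA p) = patoms p"
| "hatoms (HK f) = hatoms f"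
| "hatoms (HDelta ob f) = hatoms f"
| "patoms (PH f) = hatoms f"
| "patoms (PNot p) = patoms p"
| "patoms (PAnd p q) = patoms p \<union> patoms q"
| "patoms (PX p) = patoms p"
| "patoms (PU p q) = patoms p \<union> patoms q"

definition hOr :: "('ap,'o) hform \<Rightarrow> ('ap,'o) hform \<Rightarrow> ('ap,'o) hform" where
  "hOr f g = HNot (HAnd (HNot f) (HNot g))"
definition hTop :: "'ap \<Rightarrow> ('ap,'o) hform" where
  "hTop q = hOr (HProp q) (HNot (HProp q))"
definition pOr :: "('ap,'o) pform \<Rightarrow> ('ap,'o) pform \<Rightarrow> ('ap,'o) pform" where
  "pOr f g = PNot (PAnd (PNot f) (PNot g))"
definition pImp :: "('ap,'o) pform \<Rightarrow> ('ap,'o) pform \<Rightarrow> ('ap,'o) pform" where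
  "pImp f g = pOr (PNot f) g"
definition pF :: "'ap \<Rightarrow> ('ap,'o) pform \<Rightarrow> ('ap,'o) pform" where
  "pF q f = PU (PH (hTop q)) f"
definition pG :: "'ap \<Rightarrow> ('ap,'o) pform \<Rightarrow> ('ap,'o) pform" where
  "pG q f = PNot (pF q (PNot f))"

record ('ap, 's, 'o) model =
  APf :: "'ap set"
  St  :: "'s set"
  Tr  :: "('s \<times> 's) set"
  Val :: "'s \<Rightarrow> 'ap set"
  Sim :: "'o \<Rightarrow> ('s \<times> 's) set"
  sI  :: 's
  oI  :: 'o

definition wf_model :: "('ap, 's, 'o) model \<Rightarrow> bool" where
  "wf_model M \<longleftrightarrow> finite (APf M) \<and> finite (St M) \<and> Tr M \<subseteq> St M \<times> St M
     \<and> (\<forall>s\<in>St M. \<exists>s'. (s, s') \<in> Tr M)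
     \<and> (\<forall>s\<in>St M. Val M s \<subseteq> APf M)
     \<and> (\<forall>ob. equiv (St M) (Sim M ob))
     \<and> sI M \<in> St M"

definition is_path :: "('ap, 's, 'o) model \<Rightarrow> (nat \<Rightarrow> 's) \<Rightarrow> bool" where
  "is_path M \<pi> \<longleftrightarrow> (\<forall>i. \<pi> i \<in> St M \<and> (\<pi> i, \<pi> (Suc i)) \<in> Tr M)"

definition is_history :: "('ap, 's, 'o) model \<Rightarrow> 's list \<Rightarrow> bool" where
  "is_history M h \<longleftrightarrow> h \<noteq> [] \<and> (\<exists>\<pi>. is_path M \<pi> \<and> h = map \<pi> [0..<length h])"

type_synonym 'o obsrec = "('o \<times> nat) list"

fun ol :: "'o \<Rightarrow> 'o obsrec \<Rightarrow> nat \<Rightarrow> 'o list" where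
  "ol oi r 0 = oi # map fst (filter (\<lambda>x. snd x = 0) r)"
| "ol oi r (Suc n) = last (ol oi r n) # map fst (filter (\<lambda>x. snd x = Suc n) r)"

definition hequiv :: "('ap, 's, 'o) model \<Rightarrow> 'o obsrec \<Rightarrow> 's list \<Rightarrow> 's list \<Rightarrow> bool" where
  "hequiv M r h h' \<longleftrightarrow> length h = length h' \<and>
     (\<forall>i<length h. \<forall>ob\<in>set (ol (oI M) r i). (h ! i, h' ! i) \<in> Sim M ob)"

primrec hsat :: "('ap, 's, 'o) model \<Rightarrow> 's list \<Rightarrow> 'o obsrec \<Rightarrow> ('ap, 'o) hform \<Rightarrow> bool"
  and psat :: "('ap, 's, 'o) model \<Rightarrow> (nat \<Rightarrow> 's) \<Rightarrow> nat \<Rightarrow> 'o obsrec \<Rightarrow> ('ap, 'o) pform \<Rightarrow> bool" where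
  "hsat M h r (HProp a) = (a \<in> Val M (last h))"
| "hsat M h r (HNot f) = (\<not> hsat M h r f)"
| "hsat M h r (HAnd f g) = (hsat M h r f \<and> hsat M h r g)"
| "hsat M h r (HA p) = (\<forall>\<pi>. is_path M \<pi> \<and> (\<forall>i<length h. \<pi> i = h ! i)
                          \<longrightarrow> psat M \<pi> (length h - 1) r p)"
| "hsat M h r (HK f) = (\<forall>h'. is_history M h' \<and> hequiv M r h h' \<longrightarrow> hsat M h' r f)"
| "hsat M h r (HDelta ob f) = hsat M h (r @ [(ob, length h - 1)]) f"
| "psat M \<pi> n r (PH f) = hsat M (map \<pi> [0..<Suc n]) r f"
| "psat M \<pi> n r (PNot p) = (\<not> psat M \<pi> n r p)"
| "psat M \<pi> n r (PAnd p q) = (psat M \<pi> n r p \<and> psat M \<pi> n r q)"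
| "psat M \<pi> n r (PX p) = psat M \<pi> (Suc n) r p"
| "psat M \<pi> n r (PU p q) = (\<exists>m\<ge>n. psat M \<pi> m r q \<and> (\<forall>k. n \<le> k \<and> k < m \<longrightarrow> psat M \<pi> k r p))"

definition models :: "('ap, 's, 'o) model \<Rightarrow> ('ap, 'o) hform \<Rightarrow> bool" where
  "models M \<phi> \<longleftrightarrow> hsat M [sI M] [] \<phi>"

section \<open>The construction of M' (observation set {*} = unit)\<close>

definition Mprime :: "('obs \<Rightarrow> 'ap) \<Rightarrow> ('ap, 's, 'obs) model \<Rightarrow> ('ap, 's \<times> 'obs, unit) model" where
  "Mprime p M = \<lparr> APf = APf M \<union> range p,
     St = St M \<times> UNIV,
     Tr = {((s, ob), (s', ob)) | s s' ob. (s, s') \<in> Tr M}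
          \<union> {((s, ob), (s, ob')) | s ob ob'. s \<in> St M \<and> ob \<noteq> ob'},
     Val = (\<lambda>(s, ob). Val M s \<union> {p ob}),
     Sim = (\<lambda>_. {((s, ob), (s', ob)) | s s' ob. (s, s') \<in> Sim M ob}),
     sI = (sI M, oI M),
     oI = () \<rparr>"

primrec tr :: "('obs \<Rightarrow> 'ap) \<Rightarrow> 'obs \<Rightarrow> ('ap, 'obs) hform \<Rightarrow> ('ap, unit) hform"
  and trp :: "('obs \<Rightarrow> 'ap) \<Rightarrow> 'obs \<Rightarrow> ('ap, 'obs) pform \<Rightarrow> ('ap, unit) pform" where
  "tr p ob (HProp a) = HProp a"
| "tr p ob (HNot f) = HNot (tr p ob f)"
| "tr p ob (HAnd f g) = HAnd (tr p ob f) (tr p ob g)"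
| "tr p ob (HK f) = HK (tr p ob f)"
| "tr p ob (HA q) = HA (pImp (pG (p ob) (PH (HProp (p ob)))) (trp p ob q))"
| "tr p ob (HDelta ob' f) =
     (if ob' = ob then tr p ob' f
      else HA (PX (pImp (PH (HProp (p ob'))) (PH (tr p ob' f)))))"
| "trp p ob (PH f) = PH (tr p ob f)"
| "trp p ob (PNot q) = PNot (trp p ob q)"
| "trp p ob (PAnd q q') = PAnd (trp p ob q) (trp p ob q')"
| "trp p ob (PX q) = PX (trp p ob q)"
| "trp p ob (PU q q') = PU (trp p ob q) (trp p ob q')"

end

theory Submission
  imports Defs
begin

text \<open>A history h of M read under a record r corresponds to its expansion, the history of M'
  that replays at every position the observations recorded there as switching steps between
  the copies of M. The expansion ends in the copy of the current observation o, and there tr o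
  is faithful: the single relation of M' relates two states of the same copy o' exactly when the
  underlying states are related by the relation for o', so equivalence of expansions is
  equivalence of histories under r; the paths of M' that stay in the copy o (G p o) are the
  expansions of the paths of M, with a fixed delay; and a \<Delta> for a new observation is one more
  switching step, taken by AX.\<close>

lemma is_history_map_path: "is_path N \<pi> \<Longrightarrow> is_history N (map \<pi> [0..<Suc k])"
  unfolding is_history_def by (intro conjI exI[of _ \<pi>]) auto

lemma is_history_extends_to_path: "is_history N h \<Longrightarrow> \<exists>\<pi>. is_path N \<pi> \<and> (\<forall>i<length h. \<pi> i = h ! i)"
  unfolding is_history_def by (metis add_0 diff_zero nth_map_upt)

lemma is_path_St: "is_path N \<pi> \<Longrightarrow> \<pi> i \<in> St N"
  and is_path_Tr: "is_path N \<pi> \<Longrightarrow> (\<pi> i, \<pi> (Suc i)) \<in> Tr N"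
  unfolding is_path_def by blast+

lemma is_history_subset_St: "is_history N h \<Longrightarrow> set h \<subseteq> St N"
  unfolding is_history_def by (metis (no_types, lifting) ex_map_conv is_path_St subsetI)

lemma ex_path_from:
  assumes "Tr N \<subseteq> St N \<times> St N" and "\<forall>s\<in>St N. \<exists>s'. (s, s') \<in> Tr N" and "s \<in> St N"
  shows "\<exists>\<pi>. is_path N \<pi> \<and> \<pi> 0 = s"
proof -
  obtain f where f: "\<And>s. s \<in> St N \<Longrightarrow> (s, f s) \<in> Tr N" using assms(2) by metis
  have "(f ^^ i) s \<in> St N" for i
    by (induction i) (use assms(1,3) f in auto)
  then have "is_path N (\<lambda>i. (f ^^ i) s)" using f by (simp add: is_path_def)
  then show ?thesis by force
qed

lemma is_history_iff_successively:
  assumes "Tr N \<subseteq> St N \<times> St N" and "\<forall>s\<in>St N. \<exists>s'. (s, s') \<in> Tr N"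
  shows "is_history N h \<longleftrightarrow> h \<noteq> [] \<and> last h \<in> St N \<and> successively (\<lambda>a b. (a, b) \<in> Tr N) h"
proof
  assume "is_history N h"
  then obtain \<pi> where h: "h \<noteq> []" "is_path N \<pi>" "h = map \<pi> [0..<length h]"
    unfolding is_history_def by blast
  have "successively (\<lambda>a b. (a, b) \<in> Tr N) (map \<pi> [0..<length h])"
    using h(2) by (simp add: successively_conv_nth is_path_Tr)
  then show "h \<noteq> [] \<and> last h \<in> St N \<and> successively (\<lambda>a b. (a, b) \<in> Tr N) h"
    using h \<open>is_history N h\<close> is_history_subset_St by fastforce
next
  assume h: "h \<noteq> [] \<and> last h \<in> St N \<and> successively (\<lambda>a b. (a, b) \<in> Tr N) h"
  define n where "n = length h - 1"
  obtain \<rho> where \<rho>: "is_path N \<rho>" "\<rho> 0 = h ! n"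
    using ex_path_from[OF assms] h by (metis last_conv_nth n_def)
  define \<pi> where "\<pi> i = (if i < n then h ! i else \<rho> (i - n))" for i
  have step: "(h ! i, h ! Suc i) \<in> Tr N" if "Suc i < length h" for i
    using h that successively_nth by fastforce
  have "\<pi> i \<in> St N \<and> (\<pi> i, \<pi> (Suc i)) \<in> Tr N" for i
  proof (cases "Suc i < n")
    case True
    then show ?thesis using step[of i] assms(1) by (force simp: \<pi>_def n_def)
  next
    case False
    then consider "Suc i = n" | "n \<le> i" by linarith
    then show ?thesis
    proof cases
      case 1
      then show ?thesis using step[of i] assms(1) \<rho> by (force simp: \<pi>_def n_def)
    next
      case 2
      then show ?thesis using \<rho>(1) by (auto simp: \<pi>_def is_path_def Suc_diff_le)
    qed
  qed
  then have "is_path N \<pi>" by (simp add: is_path_def)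
  moreover have "h = map \<pi> [0..<length h]"
    using h \<rho>(2) by (intro nth_equalityI) (auto simp: \<pi>_def n_def intro!: arg_cong[where f="(!) h"])
  ultimately show "is_history N h" using h unfolding is_history_def by blast
qed

lemma psat_pImp [simp]: "psat N \<pi> n r (pImp a b) \<longleftrightarrow> (psat N \<pi> n r a \<longrightarrow> psat N \<pi> n r b)"
  by (auto simp: pImp_def pOr_def)

lemma hsat_hTop [simp]: "hsat N h r (hTop q)"
  by (auto simp: hTop_def hOr_def)

lemma psat_pG [simp]: "psat N \<pi> n r (pG q f) \<longleftrightarrow> (\<forall>m\<ge>n. psat N \<pi> m r f)"
  by (auto simp: pG_def pF_def)

lemma psat_PU_shift:
  fixes d n :: nat
  assumes "\<And>m. m \<ge> n \<Longrightarrow> A m \<longleftrightarrow> A' (m + d)" and "\<And>m. m \<ge> n \<Longrightarrow> B m \<longleftrightarrow> B' (m + d)"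
    and "m \<ge> n"
  shows "(\<exists>m'\<ge>m. B m' \<and> (\<forall>k. m \<le> k \<and> k < m' \<longrightarrow> A k)) \<longleftrightarrow>
         (\<exists>m'\<ge>m + d. B' m' \<and> (\<forall>k. m + d \<le> k \<and> k < m' \<longrightarrow> A' k))"
proof
  assume "\<exists>m'\<ge>m. B m' \<and> (\<forall>k. m \<le> k \<and> k < m' \<longrightarrow> A k)"
  then obtain m' where m': "m' \<ge> m" "B m'" "\<forall>k. m \<le> k \<and> k < m' \<longrightarrow> A k" by blast
  have "A' k" if "m + d \<le> k" "k < m' + d" for k
  proof -
    have "m \<le> k - d" "k - d < m'" using that by auto
    then have "A (k - d)" using m'(3) by blast
    then show ?thesis using assms(1)[of "k - d"] assms(3) that by auto
  qed
  then show "\<exists>m'\<ge>m + d. B' m' \<and> (\<forall>k. m + d \<le> k \<and> k < m' \<longrightarrow> A' k)"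
    using m' assms(2)[of m'] assms(3) by (intro exI[of _ "m' + d"]) auto
next
  assume "\<exists>m'\<ge>m + d. B' m' \<and> (\<forall>k. m + d \<le> k \<and> k < m' \<longrightarrow> A' k)"
  then obtain m' where m': "m' \<ge> m + d" "B' m'" "\<forall>k. m + d \<le> k \<and> k < m' \<longrightarrow> A' k" by blast
  have "A k" if "m \<le> k" "k < m' - d" for k
    using m'(3)[rule_format, of "k + d"] assms(1)[of k] assms(3) that by auto
  moreover have "B (m' - d)" using m' assms(2)[of "m' - d"] assms(3) by auto
  ultimately show "\<exists>m'\<ge>m. B m' \<and> (\<forall>k. m \<le> k \<and> k < m' \<longrightarrow> A k)"
    using m'(1) by (intro exI[of _ "m' - d"]) auto
qed

section \<open>Observation lists and the expansion of histories\<close>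

lemma ol_ne [simp]: "ol oi r i \<noteq> []"
  by (cases i) auto

lemma ol_snoc_less: "i < n \<Longrightarrow> ol oi (r @ [(ob, n)]) i = ol oi r i"
  by (induction i) auto

lemma ol_snoc_eq: "ol oi (r @ [(ob, n)]) n = ol oi r n @ [ob]"
  by (cases n) (auto simp: ol_snoc_less)

lemma ol_beyond: "\<forall>x\<in>set r. snd x \<le> n \<Longrightarrow> n < i \<Longrightarrow> ol oi r i = [last (ol oi r n)]"
proof (induction i)
  case (Suc i)
  have "filter (\<lambda>x. snd x = Suc i) r = []" using Suc.prems by (force simp: filter_empty_conv)
  moreover have "n < i \<or> n = i" using Suc.prems(2) by linarith
  ultimately show ?case using Suc by auto
qed simp

lemma ol_Nil_unit: "ol () [] i = [()]"
  by (induction i) auto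

definition cur_obs :: "'o \<Rightarrow> 'o obsrec \<Rightarrow> nat \<Rightarrow> 'o" where
  "cur_obs oi r i = last (ol oi r i)"

text \<open>Re-recording the current observation is no switching step (tr maps such a \<Delta> to its
  argument), hence adjacent duplicates are dropped.\<close>
definition obs_run :: "'o \<Rightarrow> 'o obsrec \<Rightarrow> nat \<Rightarrow> 'o list" where
  "obs_run oi r i = remdups_adj (ol oi r i)"

definition expand :: "'o \<Rightarrow> 'o obsrec \<Rightarrow> 's list \<Rightarrow> ('s \<times> 'o) list" where
  "expand oi r h = concat (map (\<lambda>i. map (\<lambda>c. (h ! i, c)) (obs_run oi r i)) [0..<length h])"

lemma obs_run_ne [simp]: "obs_run oi r i \<noteq> []"
  by (simp add: obs_run_def)

lemma successively_neq_obs_run: "successively (\<noteq>) (obs_run oi r n)"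
  using distinct_adj_remdups_adj unfolding obs_run_def distinct_adj_def by blast

lemma hd_obs_run: "0 < n \<Longrightarrow> hd (obs_run oi r n) = cur_obs oi r (n - 1)"
  by (cases n) (auto simp: obs_run_def cur_obs_def)

lemma set_obs_run [simp]: "set (obs_run oi r n) = set (ol oi r n)"
  by (simp add: obs_run_def)

lemma expand_Nil [simp]: "expand oi r [] = []"
  by (simp add: expand_def)

lemma expand_snoc: "expand oi r (h @ [s]) = expand oi r h @ map (\<lambda>c. (s, c)) (obs_run oi r (length h))"
  unfolding expand_def
  by (simp, rule arg_cong[where f=concat], rule map_cong) (auto simp: nth_append)

lemma expand_single: "expand oi [] [s] = [(s, oi)]"
  by (simp add: expand_def obs_run_def)

lemma length_expand: "length h \<le> length (expand oi r h)"
proof (induction h rule: rev_induct)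
  case (snoc x xs)
  have "0 < length (obs_run oi r (length xs))" by simp
  then show ?case
    using snoc.IH by (simp only: expand_snoc length_append length_map list.size)
qed simp

lemma expand_ne: "h \<noteq> [] \<Longrightarrow> expand oi r h \<noteq> []"
  using length_expand[of h oi r] by auto

lemma last_expand: "h \<noteq> [] \<Longrightarrow> last (expand oi r h) = (last h, cur_obs oi r (length h - 1))"
  by (induction h rule: rev_induct) (simp_all add: expand_snoc last_map obs_run_def cur_obs_def)

lemma expand_cong: "(\<And>i. i < length h \<Longrightarrow> obs_run oi r i = obs_run oi r' i) \<Longrightarrow> expand oi r h = expand oi r' h"
  unfolding expand_def by (rule arg_cong[where f=concat], rule map_cong) auto

lemma cur_obs_snoc: "cur_obs oi (r @ [(ob, n)]) n = ob"
  by (simp add: cur_obs_def ol_snoc_eq)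

lemma expand_snoc_record:
  assumes "h \<noteq> []" and "n = length h - 1"
  shows "expand oi (r @ [(ob, n)]) h = expand oi r h @ (if ob = cur_obs oi r n then [] else [(last h, ob)])"
proof -
  obtain xs s where h: "h = xs @ [s]" using assms(1) rev_exhaust by blast
  have n: "length xs = n" using h assms(2) by simp
  have xs: "expand oi (r @ [(ob, n)]) xs = expand oi r xs"
    by (rule expand_cong) (auto simp: obs_run_def ol_snoc_less n)
  obtain ys y where ol: "ol oi r n = ys @ [y]" using rev_exhaust[of "ol oi r n"] by auto
  have "obs_run oi (r @ [(ob, n)]) n = obs_run oi r n @ (if ob = cur_obs oi r n then [] else [ob])"
    unfolding obs_run_def ol_snoc_eq ol cur_obs_def using remdups_adj_append_two[of ys y ob] by simp
  then show ?thesis unfolding h expand_snoc xs n by auto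
qed

lemma cur_obs_beyond: "\<forall>x\<in>set r. snd x \<le> n \<Longrightarrow> n \<le> k \<Longrightarrow> cur_obs oi r k = cur_obs oi r n"
  using ol_beyond[of r n k oi] by (cases "n = k") (auto simp: cur_obs_def)

lemma expand_map_upt_beyond:
  assumes "\<forall>i<length h. \<pi> i = h ! i" and "h \<noteq> []" and "n = length h - 1"
    and "\<forall>x\<in>set r. snd x \<le> n" and "n \<le> k"
  shows "expand oi r (map \<pi> [0..<Suc k]) = expand oi r h @ map (\<lambda>i. (\<pi> i, cur_obs oi r n)) [Suc n..<Suc k]"
  using assms(5)
proof (induction k rule: nat_induct_at_least)
  case base
  have "map \<pi> [0..<Suc n] = h" using assms(1-3) by (intro nth_equalityI) auto
  then show ?case by simp
next
  case (Suc k)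
  have "obs_run oi r (Suc k) = [cur_obs oi r n]"
    using ol_beyond[OF assms(4), of "Suc k" oi] Suc by (simp add: obs_run_def cur_obs_def)
  moreover have "map \<pi> [0..<Suc (Suc k)] = map \<pi> [0..<Suc k] @ [\<pi> (Suc k)]"
    and "[Suc n..<Suc (Suc k)] = [Suc n..<Suc k] @ [Suc k]" using Suc by simp_all
  ultimately show ?case using Suc.IH by (simp only: expand_snoc length_map length_upt) simp
qed

text \<open>A path of M' tracks a path of M if from position n on its prefixes are the expansions
  of those of the path of M, delayed by the d switching steps inserted up to position n.\<close>
definition tracks :: "'o \<Rightarrow> 'o obsrec \<Rightarrow> nat \<Rightarrow> nat \<Rightarrow> (nat \<Rightarrow> 's) \<Rightarrow> (nat \<Rightarrow> 's \<times> 'o) \<Rightarrow> bool" where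
  "tracks oi r n d \<pi> \<pi>' \<longleftrightarrow> (\<forall>k\<ge>n. map \<pi>' [0..<Suc (k + d)] = expand oi r (map \<pi> [0..<Suc k]))"

lemma tracksI:
  assumes "h \<noteq> []" and "\<forall>x\<in>set r. snd x < length h" and "\<forall>i<length h. \<pi> i = h ! i"
    and "d = length (expand oi r h) - length h"
    and "\<And>j. \<pi>' j = (if j < length (expand oi r h) then expand oi r h ! j
                     else (\<pi> (j - d), cur_obs oi r (length h - 1)))"
  shows "tracks oi r (length h - 1) d \<pi> \<pi>'"
  unfolding tracks_def
proof (intro allI impI)
  fix k assume k: "length h - 1 \<le> k"
  define h' where "h' = expand oi r h"
  have len: "length h' = length h + d" using length_expand[of h oi r] assms(4) by (simp add: h'_def)
  have "\<forall>x\<in>set r. snd x \<le> length h - 1" using assms(2) by fastforce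
  moreover have "Suc (length h - 1) = length h" using assms(1) by simp
  ultimately have "expand oi r (map \<pi> [0..<Suc k])
      = h' @ map (\<lambda>i. (\<pi> i, cur_obs oi r (length h - 1))) [length h..<Suc k]"
    using expand_map_upt_beyond[OF assms(3,1) refl _ k] by (simp only: h'_def)
  also have "\<dots> = map \<pi>' [0..<Suc (k + d)]"
    using len k assms(1) by (intro nth_equalityI) (auto simp: assms(5) h'_def[symmetric] nth_append simp del: upt_Suc)
  finally show "map \<pi>' [0..<Suc (k + d)] = expand oi r (map \<pi> [0..<Suc k])" ..
qed

lemma Mprime_simps [simp]:
  "St (Mprime p M) = St M \<times> UNIV"
  "sI (Mprime p M) = (sI M, oI M)"
  "oI (Mprime p M) = ()"
  by (simp_all add: Mprime_def)

lemma Val_Mprime: "Val (Mprime p M) (s, ob) = Val M s \<union> {p ob}"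
  by (simp add: Mprime_def)

lemma Tr_Mprime_iff:
  "((a, c), (b, c')) \<in> Tr (Mprime p M) \<longleftrightarrow> (c = c' \<and> (a, b) \<in> Tr M) \<or> (a = b \<and> a \<in> St M \<and> c \<noteq> c')"
  by (auto simp: Mprime_def)

lemma Tr_Mprime_same_layer: "(x, y) \<in> Tr (Mprime p M) \<Longrightarrow> snd x = snd y \<Longrightarrow> (fst x, fst y) \<in> Tr M"
  by (cases x; cases y) (auto simp: Tr_Mprime_iff)

lemma Sim_Mprime_iff: "(x, y) \<in> Sim (Mprime p M) u \<longleftrightarrow> snd x = snd y \<and> (fst x, fst y) \<in> Sim M (snd x)"
  by (cases x; cases y) (auto simp: Mprime_def)

lemma hequiv_Mprime_iff:
  "hequiv (Mprime p M) [] x y \<longleftrightarrow> list_all2 (\<lambda>a b. (a, b) \<in> Sim (Mprime p M) ()) x y"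
  by (simp add: hequiv_def ol_Nil_unit list_all2_conv_all_nth)

lemma switching_run_fixes_state:
  assumes "successively (\<lambda>a b. (a, b) \<in> Tr (Mprime p M)) Z" and "successively (\<noteq>) (map snd Z)"
  shows "Z = map (\<lambda>c. (fst (hd Z), c)) (map snd Z)"
  using assms
proof (induction Z rule: induct_list012)
  case (3 z z' Z)
  then have "fst z = fst z'" by (cases z; cases z') (auto simp: Tr_Mprime_iff)
  moreover have "z' # Z = map (\<lambda>c. (fst z', c)) (map snd (z' # Z))" using 3 by simp
  ultimately show ?case by (metis list.map(2) list.sel(1) prod.collapse)
qed auto

lemma sim_Mprime_switching_run:
  assumes "list_all2 (\<lambda>a b. (a, b) \<in> Sim (Mprime p M) u) (map (Pair s) cs) Z"
    and "successively (\<lambda>a b. (a, b) \<in> Tr (Mprime p M)) Z" and "successively (\<noteq>) cs"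
  shows "\<exists>t. Z = map (Pair t) cs \<and> (\<forall>c\<in>set cs. (s, t) \<in> Sim M c)"
proof -
  have "map snd Z = cs"
    using assms(1) by (auto simp: list_all2_conv_all_nth Sim_Mprime_iff intro: nth_equalityI)
  then obtain t where Z: "Z = map (Pair t) cs"
    using switching_run_fixes_state[OF assms(2)] assms(3) by metis
  have "list_all2 (\<lambda>a b. (a, b) \<in> Sim (Mprime p M) u) (map (Pair s) cs) (map (Pair t) cs)"
    using assms(1) unfolding Z .
  then have "\<forall>c\<in>set cs. (s, t) \<in> Sim M c"
    by (simp add: list_all2_map1 list_all2_map2 list_all2_same Sim_Mprime_iff)
  then show ?thesis using Z by blast
qed

lemma hequiv_snoc:
  "length xs = length ys \<Longrightarrow> hequiv N r (xs @ [s]) (ys @ [t]) \<longleftrightarrow>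
     hequiv N r xs ys \<and> (\<forall>ob\<in>set (ol (oI N) r (length xs)). (s, t) \<in> Sim N ob)"
  unfolding hequiv_def by (auto simp: nth_append less_Suc_eq)

section \<open>Correctness of the translation\<close>

locale observation_encoding =
  fixes M :: "('ap, 's, 'obs) model" and p :: "'obs \<Rightarrow> 'ap"
  assumes wf: "wf_model M" and inj_p: "inj p" and fresh_p: "range p \<inter> APf M = {}"
begin

abbreviation "M' \<equiv> Mprime p M"
abbreviation "oi \<equiv> oI M"
abbreviation "sim' a b \<equiv> (a, b) \<in> Sim M' ()"

lemma Tr_subset: "Tr M \<subseteq> St M \<times> St M" and left_total: "\<forall>s\<in>St M. \<exists>s'. (s, s') \<in> Tr M"
  using wf unfolding wf_model_def by auto

lemma Tr'_subset: "Tr M' \<subseteq> St M' \<times> St M'"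
  using Tr_subset by (auto simp: Mprime_def)

lemma left_total': "\<forall>x\<in>St M'. \<exists>y. (x, y) \<in> Tr M'"
  using left_total by (force simp: Tr_Mprime_iff)

lemmas is_history_M_iff = is_history_iff_successively[OF Tr_subset left_total]
lemmas is_history_M'_iff = is_history_iff_successively[OF Tr'_subset left_total']

lemma p_in_Val'_iff: "a \<in> St M \<Longrightarrow> p ob \<in> Val M' (a, c) \<longleftrightarrow> ob = c"
proof -
  assume "a \<in> St M"
  then have "p ob \<notin> Val M a" using wf fresh_p unfolding wf_model_def by blast
  then show ?thesis using inj_p by (auto simp: Val_Mprime dest: injD)
qed

lemma p_in_Val'_path: "is_path M' \<pi>' \<Longrightarrow> p ob \<in> Val M' (\<pi>' m) \<longleftrightarrow> snd (\<pi>' m) = ob"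
  using is_path_St[of M' \<pi>' m] p_in_Val'_iff by (cases "\<pi>' m") auto

lemma successively_expand:
  assumes "set h \<subseteq> St M" and "successively (\<lambda>a b. (a, b) \<in> Tr M) h"
  shows "successively (\<lambda>a b. (a, b) \<in> Tr M') (expand o0 r h)"
  using assms
proof (induction h rule: rev_induct)
  case (snoc s xs)
  have obs_run: "successively (\<lambda>a b. (a, b) \<in> Tr M') (map (\<lambda>c. (s, c)) (obs_run o0 r (length xs)))"
    unfolding successively_map
    by (rule successively_mono[OF successively_neq_obs_run]) (use snoc.prems in \<open>auto simp: Tr_Mprime_iff\<close>)
  show ?case
  proof (cases "xs = []")
    case True
    then show ?thesis using obs_run expand_snoc[of o0 r "[]" s] by simp
  next
    case False
    have "(last xs, s) \<in> Tr M" using snoc.prems False by (auto simp: successively_append_iff)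
    then have "(last (expand o0 r xs), hd (map (\<lambda>c. (s, c)) (obs_run o0 r (length xs)))) \<in> Tr M'"
      using False by (simp add: last_expand hd_map hd_obs_run Tr_Mprime_iff)
    moreover have "successively (\<lambda>a b. (a, b) \<in> Tr M') (expand o0 r xs)"
      using snoc by (auto simp: successively_append_iff)
    ultimately show ?thesis using obs_run by (simp add: expand_snoc successively_append_iff)
  qed
qed simp

lemma is_history_expand: "is_history M h \<Longrightarrow> is_history M' (expand o0 r h)"
  using successively_expand[of h o0 r] expand_ne[of h o0 r] last_expand[of h o0 r]
    is_history_subset_St[of M h] unfolding is_history_M_iff is_history_M'_iff by auto

lemma list_all2_sim'_expand: "hequiv M r h h2 \<Longrightarrow> list_all2 sim' (expand oi r h) (expand oi r h2)"
proof (induction h arbitrary: h2 rule: rev_induct)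
  case Nil
  then show ?case by (simp add: hequiv_def)
next
  case (snoc s xs)
  have "length h2 = Suc (length xs)" using snoc.prems unfolding hequiv_def by simp
  then obtain ys t where h2: "h2 = ys @ [t]" and len: "length ys = length xs"
    by (cases h2 rule: rev_cases) auto
  moreover have "hequiv M r (xs @ [s]) (ys @ [t])" using snoc.prems h2 by simp
  ultimately have "hequiv M r xs ys" and "\<forall>ob\<in>set (ol oi r (length xs)). (s, t) \<in> Sim M ob"
    using hequiv_snoc[OF len[symmetric], of M r s t] by blast+
  then show ?case
    using snoc.IH h2 len
    by (auto simp: expand_snoc list_all2_map1 list_all2_map2 list_all2_same Sim_Mprime_iff
        intro!: list_all2_appendI)
qed

lemma expand_inverse:
  assumes "successively (\<lambda>a b. (a, b) \<in> Tr M') h''" and "set h'' \<subseteq> St M'"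
    and "list_all2 sim' (expand oi r h) h''"
  shows "\<exists>h2. h'' = expand oi r h2 \<and> hequiv M r h h2 \<and> successively (\<lambda>a b. (a, b) \<in> Tr M) h2
           \<and> set h2 \<subseteq> St M"
  using assms
proof (induction h arbitrary: h'' rule: rev_induct)
  case Nil
  then show ?case by (simp add: hequiv_def)
next
  case (snoc s xs)
  define cs where "cs = obs_run oi r (length xs)"
  obtain Y Z where YZ: "h'' = Y @ Z" "list_all2 sim' (expand oi r xs) Y" "list_all2 sim' (map (Pair s) cs) Z"
    using snoc.prems(3) by (auto simp: expand_snoc list_all2_append1 cs_def)
  have Y: "successively (\<lambda>a b. (a, b) \<in> Tr M') Y" "set Y \<subseteq> St M'"
    and Z: "successively (\<lambda>a b. (a, b) \<in> Tr M') Z" "set Z \<subseteq> St M'"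
    using snoc.prems(1,2) YZ(1) by (auto simp: successively_append_iff)
  obtain ys where ys: "Y = expand oi r ys" "hequiv M r xs ys" "successively (\<lambda>a b. (a, b) \<in> Tr M) ys"
      "set ys \<subseteq> St M"
    using snoc.IH[OF Y YZ(2)] by blast
  have len: "length ys = length xs" using ys(2) unfolding hequiv_def by simp
  obtain t where t: "Z = map (Pair t) cs" "\<forall>c\<in>set cs. (s, t) \<in> Sim M c"
    using sim_Mprime_switching_run[OF YZ(3) Z(1)] successively_neq_obs_run cs_def by metis
  have "t \<in> St M"
    using Z(2) t(1) hd_in_set[OF obs_run_ne, of oi r "length xs"] by (force simp: cs_def)
  have "(last ys, t) \<in> Tr M" if "ys \<noteq> []"
  proof -
    have "Y \<noteq> []" "Z \<noteq> []" using ys(1) expand_ne[OF that] t(1) by (simp_all add: cs_def)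
    then have "(last Y, hd Z) \<in> Tr M'"
      using snoc.prems(1) YZ(1) by (simp add: successively_append_iff)
    moreover have "0 < length xs" using len that by (metis length_greater_0_conv)
    ultimately show ?thesis
      using that len t(1) by (simp add: ys(1) last_expand hd_map hd_obs_run cs_def Tr_Mprime_iff)
  qed
  then have "successively (\<lambda>a b. (a, b) \<in> Tr M) (ys @ [t])"
    using ys(3) by (cases "ys = []") (simp_all add: successively_append_iff)
  moreover have "hequiv M r (xs @ [s]) (ys @ [t])"
    using hequiv_snoc[OF len[symmetric], of M r s t] ys(2) t(2) by (simp add: cs_def)
  moreover have "h'' = expand oi r (ys @ [t])"
    using YZ(1) ys(1) t(1) len by (simp add: expand_snoc cs_def)
  ultimately show ?case using ys(4) \<open>t \<in> St M\<close> by (intro exI[of _ "ys @ [t]"]) auto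
qed

lemma hsat_HK_expand_iff:
  assumes "is_history M h"
  shows "(\<forall>h''. is_history M' h'' \<and> hequiv M' [] (expand oi r h) h'' \<longrightarrow> Q h'') \<longleftrightarrow>
         (\<forall>h2. is_history M h2 \<and> hequiv M r h h2 \<longrightarrow> Q (expand oi r h2))"
proof
  assume "\<forall>h''. is_history M' h'' \<and> hequiv M' [] (expand oi r h) h'' \<longrightarrow> Q h''"
  then show "\<forall>h2. is_history M h2 \<and> hequiv M r h h2 \<longrightarrow> Q (expand oi r h2)"
    using is_history_expand list_all2_sim'_expand hequiv_Mprime_iff by blast
next
  assume Q: "\<forall>h2. is_history M h2 \<and> hequiv M r h h2 \<longrightarrow> Q (expand oi r h2)"
  show "\<forall>h''. is_history M' h'' \<and> hequiv M' [] (expand oi r h) h'' \<longrightarrow> Q h''"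
  proof (intro allI impI)
    fix h'' assume h'': "is_history M' h'' \<and> hequiv M' [] (expand oi r h) h''"
    then obtain h2 where h2: "h'' = expand oi r h2" "hequiv M r h h2"
        "successively (\<lambda>a b. (a, b) \<in> Tr M) h2" "set h2 \<subseteq> St M"
      using expand_inverse[of h'' r h] is_history_subset_St[of M' h'']
      unfolding is_history_M'_iff hequiv_Mprime_iff by blast
    have "h \<noteq> []" using assms unfolding is_history_M_iff by simp
    then have "h2 \<noteq> []" using h2(2) unfolding hequiv_def by auto
    then have "is_history M h2" using h2(3,4) unfolding is_history_M_iff by auto
    then show "Q h''" using Q h2(1,2) by blast
  qed
qed

lemma nth_expand_last:
  assumes "h \<noteq> []"
  shows "expand oi r h ! (length (expand oi r h) - 1) = (h ! (length h - 1), cur_obs oi r (length h - 1))"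
  using last_expand[OF assms, of oi r] expand_ne[OF assms, of oi r] assms by (simp add: last_conv_nth)

lemma tracking_path_of_path:
  assumes h: "is_history M h" and r: "\<forall>x\<in>set r. snd x < length h"
    and \<pi>: "is_path M \<pi>" "\<forall>i<length h. \<pi> i = h ! i"
  defines "h' \<equiv> expand oi r h" and "n \<equiv> length h - 1" and "d \<equiv> length (expand oi r h) - length h"
  obtains \<pi>' where "is_path M' \<pi>'" "\<forall>i<length h'. \<pi>' i = h' ! i"
    "\<forall>m\<ge>n + d. snd (\<pi>' m) = cur_obs oi r n" "tracks oi r n d \<pi> \<pi>'"
proof -
  define ob where "ob = cur_obs oi r n"
  have hne: "h \<noteq> []" using h is_history_M_iff by blast
  have "0 < length h" using hne by simp
  then have len: "length h' = Suc (n + d)"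
    using length_expand[of h oi r] unfolding h'_def n_def d_def by arith
  define \<pi>' where "\<pi>' j = (if j < length h' then h' ! j else (\<pi> (j - d), ob))" for j
  have beyond: "\<pi>' j = (\<pi> (j - d), ob)" if "n + d \<le> j" for j
  proof (cases "j = n + d")
    case True
    then show ?thesis
      using nth_expand_last[OF hne, of r] \<pi>(2) hne len by (simp add: \<pi>'_def h'_def n_def ob_def)
  qed (use that len in \<open>simp add: \<pi>'_def\<close>)
  have h': "successively (\<lambda>a b. (a, b) \<in> Tr M') h'" "set h' \<subseteq> St M'"
    using is_history_expand[OF h, of oi r] is_history_subset_St is_history_M'_iff
    unfolding h'_def by blast+
  have "\<pi>' j \<in> St M' \<and> (\<pi>' j, \<pi>' (Suc j)) \<in> Tr M'" for j
  proof (cases "j < n + d")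
    case True
    then show ?thesis using h' len successively_nth[OF h'(1), of j] by (auto simp: \<pi>'_def)
  next
    case False
    then have "\<pi>' j = (\<pi> (j - d), ob)" "\<pi>' (Suc j) = (\<pi> (Suc (j - d)), ob)"
      using beyond[of j] beyond[of "Suc j"] by (auto simp: Suc_diff_le)
    then show ?thesis using \<pi>(1) by (simp add: is_path_St is_path_Tr Tr_Mprime_iff)
  qed
  then have "is_path M' \<pi>'" by (simp add: is_path_def)
  moreover have "tracks oi r n d \<pi> \<pi>'"
    unfolding n_def d_def by (rule tracksI[OF hne r \<pi>(2) refl]) (simp add: \<pi>'_def h'_def ob_def n_def d_def)
  ultimately show ?thesis using that beyond by (simp add: \<pi>'_def ob_def)
qed

lemma tracked_path_of_path':
  fixes h :: "'s list" and r :: "'obs obsrec" and \<pi>' :: "nat \<Rightarrow> 's \<times> 'obs"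
  defines "h' \<equiv> expand oi r h" and "n \<equiv> length h - 1" and "d \<equiv> length (expand oi r h) - length h"
  assumes h: "is_history M h" and r: "\<forall>x\<in>set r. snd x < length h"
    and \<pi>': "is_path M' \<pi>'" "\<forall>i<length h'. \<pi>' i = h' ! i" "\<forall>m\<ge>n + d. snd (\<pi>' m) = cur_obs oi r n"
  obtains \<pi> where "is_path M \<pi>" "\<forall>i<length h. \<pi> i = h ! i" "tracks oi r n d \<pi> \<pi>'"
proof -
  define ob where "ob = cur_obs oi r n"
  have hne: "h \<noteq> []" using h is_history_M_iff by blast
  have "0 < length h" using hne by simp
  then have len: "length h' = Suc (n + d)" "length h = Suc n"
    using length_expand[of h oi r] unfolding h'_def n_def d_def by arith+
  define \<pi> where "\<pi> k = (if k < length h then h ! k else fst (\<pi>' (k + d)))" for k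
  have "h' ! (n + d) = (h ! n, ob)"
    using nth_expand_last[OF hne, of r] len unfolding h'_def[symmetric] n_def[symmetric] ob_def by simp
  then have last': "\<pi>' (n + d) = (h ! n, ob)" using \<pi>'(2) len by simp
  have layer: "(fst (\<pi>' j), fst (\<pi>' (Suc j))) \<in> Tr M" if "n + d \<le> j" for j
    using Tr_Mprime_same_layer[OF is_path_Tr[OF \<pi>'(1)]] \<pi>'(3) that by simp
  have "(\<pi> i, \<pi> (Suc i)) \<in> Tr M" for i
  proof -
    consider "Suc i < length h" | "Suc i = length h" | "length h \<le> i" by linarith
    then show ?thesis
    proof cases
      case 1
      have "successively (\<lambda>a b. (a, b) \<in> Tr M) h" using h is_history_M_iff by blast
      then show ?thesis using successively_nth 1 by (fastforce simp: \<pi>_def)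
    next
      case 2
      then show ?thesis using layer[of "n + d"] last' len by (simp add: \<pi>_def)
    next
      case 3
      then show ?thesis using layer[of "i + d"] len by (simp add: \<pi>_def)
    qed
  qed
  then have "is_path M \<pi>" using Tr_subset by (auto simp: is_path_def)
  moreover have "\<forall>i<length h. \<pi> i = h ! i" by (simp add: \<pi>_def)
  moreover have "\<pi>' j = (if j < length h' then h' ! j else (\<pi> (j - d), ob))" for j
  proof (cases "j < length h'")
    case False
    then have "\<not> j - d < length h" "j - d + d = j" "snd (\<pi>' j) = ob" using len \<pi>'(3) by (auto simp: ob_def)
    then show ?thesis using False by (cases "\<pi>' j") (simp add: \<pi>_def)
  qed (use \<pi>'(2) in simp)
  then have "tracks oi r n d \<pi> \<pi>'"
    unfolding n_def d_def by (intro tracksI[OF hne r _ refl]) (simp_all add: \<pi>_def h'_def ob_def n_def d_def)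
  ultimately show ?thesis using that by blast
qed

lemma hsat_HA_expand_iff:
  assumes h: "is_history M h" and r: "\<forall>x\<in>set r. snd x < length h"
    and d: "d = length (expand oi r h) - length h"
    and IH: "\<And>\<pi> \<pi>'. is_path M \<pi> \<Longrightarrow> tracks oi r (length h - 1) d \<pi> \<pi>' \<Longrightarrow>
       psat M \<pi> (length h - 1) r q \<longleftrightarrow> psat M' \<pi>' (length h - 1 + d) [] (trp p (cur_obs oi r (length h - 1)) q)"
  shows "hsat M h r (HA q) \<longleftrightarrow> hsat M' (expand oi r h) [] (tr p (cur_obs oi r (length h - 1)) (HA q))"
proof -
  define h' n ob where "h' = expand oi r h" and "n = length h - 1" and "ob = cur_obs oi r n"
  have "0 < length h" using h is_history_M_iff by simp
  then have len: "length h' = Suc (n + d)" using length_expand[of h oi r] d unfolding h'_def n_def by arith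
  have "hsat M' h' [] (tr p ob (HA q)) \<longleftrightarrow> (\<forall>\<pi>'. is_path M' \<pi>' \<and> (\<forall>i<length h'. \<pi>' i = h' ! i) \<longrightarrow>
      (\<forall>m\<ge>n + d. snd (\<pi>' m) = ob) \<longrightarrow> psat M' \<pi>' (n + d) [] (trp p ob q))"
    using len p_in_Val'_path by (auto simp del: upt_Suc simp: upt_Suc_append)
  moreover have "hsat M h r (HA q) \<longleftrightarrow>
      (\<forall>\<pi>. is_path M \<pi> \<and> (\<forall>i<length h. \<pi> i = h ! i) \<longrightarrow> psat M \<pi> n r q)"
    by (simp add: n_def)
  moreover have "(\<forall>\<pi>. is_path M \<pi> \<and> (\<forall>i<length h. \<pi> i = h ! i) \<longrightarrow> psat M \<pi> n r q) \<longleftrightarrow>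
      (\<forall>\<pi>'. is_path M' \<pi>' \<and> (\<forall>i<length h'. \<pi>' i = h' ! i) \<longrightarrow>
        (\<forall>m\<ge>n + d. snd (\<pi>' m) = ob) \<longrightarrow> psat M' \<pi>' (n + d) [] (trp p ob q))"
  proof (intro iffI allI impI)
    fix \<pi>' assume A: "\<forall>\<pi>. is_path M \<pi> \<and> (\<forall>i<length h. \<pi> i = h ! i) \<longrightarrow> psat M \<pi> n r q"
      and \<pi>': "is_path M' \<pi>' \<and> (\<forall>i<length h'. \<pi>' i = h' ! i)" and "\<forall>m\<ge>n + d. snd (\<pi>' m) = ob"
    then obtain \<pi> where "is_path M \<pi>" "\<forall>i<length h. \<pi> i = h ! i" "tracks oi r n d \<pi> \<pi>'"
      using tracked_path_of_path'[OF h r, unfolded d[symmetric], of \<pi>'] unfolding h'_def n_def ob_def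
      by blast
    then show "psat M' \<pi>' (n + d) [] (trp p ob q)" using A IH unfolding n_def ob_def by blast
  next
    fix \<pi> assume "\<forall>\<pi>'. is_path M' \<pi>' \<and> (\<forall>i<length h'. \<pi>' i = h' ! i) \<longrightarrow>
        (\<forall>m\<ge>n + d. snd (\<pi>' m) = ob) \<longrightarrow> psat M' \<pi>' (n + d) [] (trp p ob q)"
      and "is_path M \<pi> \<and> (\<forall>i<length h. \<pi> i = h ! i)"
    moreover obtain \<pi>' where "is_path M' \<pi>'" "\<forall>i<length h'. \<pi>' i = h' ! i"
        "\<forall>m\<ge>n + d. snd (\<pi>' m) = ob" "tracks oi r n d \<pi> \<pi>'"
      using tracking_path_of_path[OF h r, unfolded d[symmetric], of \<pi>] calculation(2)
      unfolding h'_def n_def ob_def by blast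
    ultimately show "psat M \<pi> n r q" using IH unfolding n_def ob_def by blast
  qed
  ultimately show ?thesis by (simp add: h'_def n_def ob_def)
qed

lemma hsat_switch_iff:
  assumes h': "is_history M' h'" and last: "last h' = (s, c)" and "c \<noteq> ob"
  shows "hsat M' h' [] (HA (PX (pImp (PH (HProp (p ob))) (PH g)))) \<longleftrightarrow> hsat M' (h' @ [(s, ob)]) [] g"
proof -
  define L where "L = length h'"
  have "0 < L" using h' is_history_M'_iff by (simp add: L_def)
  have s: "s \<in> St M" using h' last is_history_M'_iff by auto
  have extends: "map \<pi>' [0..<Suc L] = h' @ [(s, ob)]"
    if "\<forall>i<L. \<pi>' i = h' ! i" "\<pi>' L = (s, ob)" for \<pi>'
    using that by (intro nth_equalityI) (auto simp: nth_append less_Suc_eq L_def simp del: upt_Suc)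
  have "hsat M' h' [] (HA (PX (pImp (PH (HProp (p ob))) (PH g)))) \<longleftrightarrow>
      (\<forall>\<pi>'. is_path M' \<pi>' \<and> (\<forall>i<L. \<pi>' i = h' ! i) \<longrightarrow>
         snd (\<pi>' L) = ob \<longrightarrow> hsat M' (map \<pi>' [0..<Suc L]) [] g)"
    using \<open>0 < L\<close> p_in_Val'_path by (auto simp: L_def last_map simp del: upt_Suc)
  also have "\<dots> \<longleftrightarrow> hsat M' (h' @ [(s, ob)]) [] g"
  proof
    assume A: "\<forall>\<pi>'. is_path M' \<pi>' \<and> (\<forall>i<L. \<pi>' i = h' ! i) \<longrightarrow>
         snd (\<pi>' L) = ob \<longrightarrow> hsat M' (map \<pi>' [0..<Suc L]) [] g"
    have "(last h', (s, ob)) \<in> Tr M'" using last s assms(3) by (simp add: Tr_Mprime_iff)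
    moreover have "h' \<noteq> []" "successively (\<lambda>a b. (a, b) \<in> Tr M') h'"
      using h' is_history_M'_iff by blast+
    ultimately have "is_history M' (h' @ [(s, ob)])"
      using s unfolding is_history_M'_iff by (simp add: successively_append_iff)
    then obtain \<pi>' where \<pi>': "is_path M' \<pi>'" "\<forall>i<Suc L. \<pi>' i = (h' @ [(s, ob)]) ! i"
      using is_history_extends_to_path[of M' "h' @ [(s, ob)]"] by (auto simp: L_def)
    then have "\<forall>i<L. \<pi>' i = h' ! i" "\<pi>' L = (s, ob)" by (simp_all add: nth_append L_def)
    then have "hsat M' (map \<pi>' [0..<Suc L]) [] g" using A[rule_format, of \<pi>'] \<pi>'(1) by simp
    then show "hsat M' (h' @ [(s, ob)]) [] g"
      using extends \<open>\<forall>i<L. \<pi>' i = h' ! i\<close> \<open>\<pi>' L = (s, ob)\<close> by simp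
  next
    assume B: "hsat M' (h' @ [(s, ob)]) [] g"
    show "\<forall>\<pi>'. is_path M' \<pi>' \<and> (\<forall>i<L. \<pi>' i = h' ! i) \<longrightarrow>
         snd (\<pi>' L) = ob \<longrightarrow> hsat M' (map \<pi>' [0..<Suc L]) [] g"
    proof (intro allI impI)
      fix \<pi>' assume \<pi>': "is_path M' \<pi>' \<and> (\<forall>i<L. \<pi>' i = h' ! i)" and "snd (\<pi>' L) = ob"
      moreover have "\<pi>' (L - 1) = (s, c)"
        using \<pi>' last \<open>0 < L\<close> by (simp add: L_def last_conv_nth)
      moreover have "(\<pi>' (L - 1), \<pi>' L) \<in> Tr M'"
        using is_path_Tr[of M' \<pi>' "L - 1"] \<pi>' \<open>0 < L\<close> by simp
      ultimately have "\<pi>' L = (s, ob)" using assms(3) by (cases "\<pi>' L") (auto simp: Tr_Mprime_iff)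
      then show "hsat M' (map \<pi>' [0..<Suc L]) [] g" using B \<pi>' extends by simp
    qed
  qed
  finally show ?thesis .
qed

lemma hsat_tr_iff:
  "is_history M h \<Longrightarrow> \<forall>x\<in>set r. snd x < length h \<Longrightarrow> hatoms \<phi> \<inter> range p = {} \<Longrightarrow>
     hsat M h r \<phi> \<longleftrightarrow> hsat M' (expand oi r h) [] (tr p (cur_obs oi r (length h - 1)) \<phi>)"
  and psat_trp_iff:
  "is_path M \<pi> \<Longrightarrow> \<forall>x\<in>set r. snd x \<le> n \<Longrightarrow> tracks oi r n d \<pi> \<pi>' \<Longrightarrow> patoms q \<inter> range p = {} \<Longrightarrow>
     n \<le> m \<Longrightarrow> psat M \<pi> m r q \<longleftrightarrow> psat M' \<pi>' (m + d) [] (trp p (cur_obs oi r n) q)"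
proof (induction \<phi> and q arbitrary: h r and \<pi> \<pi>' r n d m)
  case (HProp a)
  then show ?case
    using is_history_M_iff last_expand[of h oi r] by (auto simp: Val_Mprime)
next
  case (HNot f)
  then show ?case by simp
next
  case (HAnd f g)
  then show ?case by (simp add: Int_Un_distrib2)
next
  case (HA q)
  have "\<forall>x\<in>set r. snd x \<le> length h - 1" using HA.prems(2) by fastforce
  then show ?case
    using hsat_HA_expand_iff[OF HA.prems(1,2) refl] HA.IH HA.prems(3) by simp
next
  case (HK f)
  have "hsat M h2 r f \<longleftrightarrow> hsat M' (expand oi r h2) [] (tr p (cur_obs oi r (length h - 1)) f)"
    if "is_history M h2" and "hequiv M r h h2" for h2
    using HK.IH[OF that(1)] HK.prems that(2) unfolding hequiv_def by simp
  then show ?case using hsat_HK_expand_iff[OF HK.prems(1)] by auto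
next
  case (HDelta ob f)
  define n where "n = length h - 1"
  have hne: "h \<noteq> []" using HDelta.prems(1) is_history_M_iff by blast
  have IH: "hsat M h (r @ [(ob, n)]) f \<longleftrightarrow> hsat M' (expand oi (r @ [(ob, n)]) h) [] (tr p ob f)"
    using HDelta.IH[OF HDelta.prems(1)] HDelta.prems(2,3) hne by (simp add: cur_obs_snoc n_def)
  show ?case
  proof (cases "ob = cur_obs oi r n")
    case True
    then show ?thesis using IH expand_snoc_record[OF hne refl, of oi r ob] by (simp add: n_def)
  next
    case False
    have "hsat M' (expand oi r h) [] (HA (PX (pImp (PH (HProp (p ob))) (PH (tr p ob f)))))
        \<longleftrightarrow> hsat M' (expand oi r h @ [(last h, ob)]) [] (tr p ob f)"
      using hsat_switch_iff[OF is_history_expand[OF HDelta.prems(1)] last_expand[OF hne]] False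
      by (simp add: n_def)
    then show ?thesis using IH False expand_snoc_record[OF hne refl, of oi r ob] by (simp add: n_def)
  qed
next
  case (PH f)
  have "\<forall>x\<in>set r. snd x < length (map \<pi> [0..<Suc m])" using PH.prems(2,5) by fastforce
  then have "psat M \<pi> m r (PH f) \<longleftrightarrow> hsat M' (expand oi r (map \<pi> [0..<Suc m])) [] (tr p (cur_obs oi r m) f)"
    using PH.IH[OF is_history_map_path[OF PH.prems(1)]] PH.prems(4) by (simp del: upt_Suc)
  also have "\<dots> \<longleftrightarrow> psat M' \<pi>' (m + d) [] (trp p (cur_obs oi r n) (PH f))"
    using PH.prems(2,3,5) cur_obs_beyond[of r n m oi] by (simp add: tracks_def del: upt_Suc)
  finally show ?case .
next
  case (PNot q)
  then show ?case by simp
next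
  case (PAnd q1 q2)
  then show ?case by (simp add: Int_Un_distrib2)
next
  case (PX q)
  then show ?case by simp
next
  case (PU q1 q2)
  have "psat M \<pi> k r q1 \<longleftrightarrow> psat M' \<pi>' (k + d) [] (trp p (cur_obs oi r n) q1)"
    and "psat M \<pi> k r q2 \<longleftrightarrow> psat M' \<pi>' (k + d) [] (trp p (cur_obs oi r n) q2)" if "n \<le> k" for k
    using PU.IH[OF PU.prems(1-3) _ that] PU.prems(4) by (simp_all add: Int_Un_distrib2)
  then show ?case unfolding psat.simps trp.simps using PU.prems(5) by (rule psat_PU_shift)
qed

end

theorem mainTheorem12:
  fixes M :: "('ap :: countable, 's, 'obs :: finite) model"
    and p :: "'obs \<Rightarrow> 'ap"
    and \<Phi> :: "('ap, 'obs) hform"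
  assumes "infinite (UNIV :: 'ap set)"
    and "wf_model M"
    and "inj p"
    and "range p \<inter> APf M = {}"
    and "range p \<inter> hatoms \<Phi> = {}"
  shows "models M \<Phi> \<longleftrightarrow> models (Mprime p M) (tr p (oI M) \<Phi>)"
proof -
  \<comment> \<open>The first assumption only guarantees that fresh propositions exist; here p is given.\<close>
  interpret observation_encoding M p using assms(2-4) by unfold_locales
  have "sI M \<in> St M" using assms(2) unfolding wf_model_def by blast
  then have "is_history M [sI M]" using is_history_M_iff by simp
  then have "hsat M [sI M] [] \<Phi> \<longleftrightarrow> hsat M' (expand oi [] [sI M]) [] (tr p (cur_obs oi [] 0) \<Phi>)"
    using hsat_tr_iff[of "[sI M]" "[]" \<Phi>] assms(5) by (simp add: Int_commute)
  then show ?thesis by (simp add: models_def expand_single cur_obs_def)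
qed

end
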